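(* Let $\mathcal{G}=(V,\sigma,E)$ be a signed, colored graph of type $(n,N)$ satisfying axiom (ax1), and let $\phi$ be a morphism from $\mathcal{G}$ to an augmented standard dual equivalence graph $\mathcal{G}_{\lambda,A}$ of type $(n,N)$. If $V\neq\emptyset$, then $\phi$ is surjective.
   Context: Conventions: partitions and French diagrams (cells $(i,j)$ with $1\le i\le\lambda_j$, rows numbered from the bottom); skew diagram $\rho/\lambda$ for $\lambda\subseteq\rho$ is the set difference; standard Young tableaux $\mathrm{SYT}(\rho)$ are bijections to $[N]$ increasing along rows and up columns; content of $(i,j)$ is $i-j$; the content reading word reads entries in increasing content, each diagonal southwest to northeast; the descent signature $\sigma(T)\in\{\pm1\}^{N-1}$ has $\sigma(T)_i=+1$ iff $i$ is to the left of $i+1$ in the reading word. For $1<i<N$, $d_i$ on words: if $i$ lies positionally between $i-1$ and $i+1$ it is the identity; otherwise it swaps $i$ with whichever of $i\pm1$ is farther from $i$; on tableaux it swaps the corresponding entries. A signed, colored graph of type $(n,N)$ is $(V,\sigma,E)$: a finite set $V$, $\sigma:V\to\{\pm1\}^{N-1}$, and for each $1<i<n$ a set $E_i$ of $2$-element subsets of $V$. Axiom (ax1): for all $w\in V$ and $1<i<n$, $\sigma(w)_{i-1}=-\sigma(w)_i$ iff there is $x$ with $\{w,x\}\in E_i$, and such $x$ is unique. A morphism from $(V,\sigma,E)$ to $(W,\tau,F)$ (both of type $(n,N)$ satisfying (ax1)) is a map $\phi:V\to W$ with $\tau(\phi(v))_i=\sigma(v)_i$ for all $1\le i<N$ and $\{\phi(u),\phi(v)\}\in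 F_i$ whenever $\{u,v\}\in E_i$, $1<i<n$. Augmented graph: for partitions $\lambda\subseteq\rho$ with $|\lambda|=n$, $|\rho|=N$, and a filling $A$ of $\rho/\lambda$ with entries $n+1,\dots,N$, let $\mathrm{ASYT}(\lambda,A)$ be the set of $T\in\mathrm{SYT}(\rho)$ whose restriction to $\rho/\lambda$ equals $A$ (assumed nonempty). $\mathcal{G}_{\lambda,A}$ is the signed colored graph of type $(n,N)$ with vertex set $\mathrm{ASYT}(\lambda,A)$, signature the descent signature in $\{\pm1\}^{N-1}$, and $E_i=\{\{T,d_i(T)\}:d_i(T)\ne T\}$ for $1<i<n$. *)

theory Defs
  imports Main "HOL-Library.Product_Lexorder"
begin

text \<open>A partition is a weakly decreasing list of positive naturals (its row lengths,
bottom row first). A cell (i,j) has column i and row j (rows numbered from the bottom),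
with 1 \<le> i \<le> lambda_j.\<close>

definition is_partition :: "nat list \<Rightarrow> bool" where
  "is_partition la \<longleftrightarrow> sorted_wrt (\<ge>) la \<and> 0 \<notin> set la"

definition psize :: "nat list \<Rightarrow> nat" where
  "psize la = sum_list la"

definition diagram :: "nat list \<Rightarrow> (nat \<times> nat) set" where
  "diagram la = {(i, j). 1 \<le> j \<and> j \<le> length la \<and> 1 \<le> i \<and> i \<le> la ! (j - 1)}"

definition skew :: "nat list \<Rightarrow> nat list \<Rightarrow> (nat \<times> nat) set" where
  "skew rho la = diagram rho - diagram la"

text \<open>A tableau is a function on cells, taken to be 0 outside its diagram.\<close>

definition SYT :: "nat list \<Rightarrow> (nat \<times> nat \<Rightarrow> nat) set" where
  "SYT rho = {T. bij_betw T (diagram rho) {1..psize rho}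
              \<and> (\<forall>c. c \<notin> diagram rho \<longrightarrow> T c = 0)
              \<and> (\<forall>i j. (i, j) \<in> diagram rho \<and> (i + 1, j) \<in> diagram rho \<longrightarrow> T (i, j) < T (i + 1, j))
              \<and> (\<forall>i j. (i, j) \<in> diagram rho \<and> (i, j + 1) \<in> diagram rho \<longrightarrow> T (i, j) < T (i, j + 1))}"

definition content :: "nat \<times> nat \<Rightarrow> int" where
  "content c = int (fst c) - int (snd c)"

definition rkey :: "nat \<times> nat \<Rightarrow> int \<times> nat" where
  "rkey c = (content c, snd c)"

definition reading_word :: "(nat \<times> nat \<Rightarrow> nat) \<Rightarrow> nat list" where
  "reading_word T = map T (sorted_key_list_of_set rkey {c. T c \<noteq> 0})"

definition pos :: "nat list \<Rightarrow> nat \<Rightarrow> nat" where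
  "pos w x = (LEAST k. k < length w \<and> w ! k = x)"

definition desc_sig :: "(nat \<times> nat \<Rightarrow> nat) \<Rightarrow> nat \<Rightarrow> int" where
  "desc_sig T i = (if pos (reading_word T) i < pos (reading_word T) (i + 1) then 1 else -1)"

definition ndist :: "nat \<Rightarrow> nat \<Rightarrow> nat" where
  "ndist a b = (if a \<le> b then b - a else a - b)"

text \<open>The letter that i is swapped with by d_i on the word w (i itself if d_i is the identity).\<close>
definition partner :: "nat \<Rightarrow> nat list \<Rightarrow> nat" where
  "partner i w = (let p = pos w (i - 1); q = pos w i; r = pos w (i + 1) in
     if (p < q \<and> q < r) \<or> (r < q \<and> q < p) then i
     else if ndist q p > ndist q r then i - 1 else i + 1)"

definition swapv :: "nat \<Rightarrow> nat \<Rightarrow> nat \<Rightarrow> nat" where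
  "swapv a b x = (if x = a then b else if x = b then a else x)"

definition d_word :: "nat \<Rightarrow> nat list \<Rightarrow> nat list" where
  "d_word i w = map (swapv i (partner i w)) w"

definition d_tab :: "nat \<Rightarrow> (nat \<times> nat \<Rightarrow> nat) \<Rightarrow> (nat \<times> nat \<Rightarrow> nat)" where
  "d_tab i T = (\<lambda>c. swapv i (partner i (reading_word T)) (T c))"

text \<open>Type (n,N): signatures are in {+1,-1}^(N-1) (indices 1..N-1), edge sets E_i for 1<i<n.\<close>
definition signed_colored_graph ::
  "nat \<Rightarrow> nat \<Rightarrow> 'v set \<Rightarrow> ('v \<Rightarrow> nat \<Rightarrow> int) \<Rightarrow> (nat \<Rightarrow> 'v set set) \<Rightarrow> bool" where
  "signed_colored_graph n N V sig E \<longleftrightarrow> finite V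
     \<and> (\<forall>w\<in>V. \<forall>i. 1 \<le> i \<and> i < N \<longrightarrow> sig w i \<in> {1, -1})
     \<and> (\<forall>i. 1 < i \<and> i < n \<longrightarrow> (\<forall>e\<in>E i. e \<subseteq> V \<and> card e = 2))"

definition ax1 :: "nat \<Rightarrow> 'v set \<Rightarrow> ('v \<Rightarrow> nat \<Rightarrow> int) \<Rightarrow> (nat \<Rightarrow> 'v set set) \<Rightarrow> bool" where
  "ax1 n V sig E \<longleftrightarrow> (\<forall>w\<in>V. \<forall>i. 1 < i \<and> i < n \<longrightarrow>
      ((sig w (i - 1) = - sig w i) \<longleftrightarrow> (\<exists>x. {w, x} \<in> E i))
      \<and> (\<forall>x y. {w, x} \<in> E i \<and> {w, y} \<in> E i \<longrightarrow> x = y))"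

definition morphism ::
  "nat \<Rightarrow> nat \<Rightarrow> 'v set \<Rightarrow> ('v \<Rightarrow> nat \<Rightarrow> int) \<Rightarrow> (nat \<Rightarrow> 'v set set)
   \<Rightarrow> 'w set \<Rightarrow> ('w \<Rightarrow> nat \<Rightarrow> int) \<Rightarrow> (nat \<Rightarrow> 'w set set) \<Rightarrow> ('v \<Rightarrow> 'w) \<Rightarrow> bool" where
  "morphism n N V sig E W tau F phi \<longleftrightarrow>
     (\<forall>v\<in>V. phi v \<in> W)
     \<and> (\<forall>v\<in>V. \<forall>i. 1 \<le> i \<and> i < N \<longrightarrow> tau (phi v) i = sig v i)
     \<and> (\<forall>i. 1 < i \<and> i < n \<longrightarrow> (\<forall>u v. {u, v} \<in> E i \<longrightarrow> {phi u, phi v} \<in> F i))"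

definition ASYT :: "nat list \<Rightarrow> nat list \<Rightarrow> (nat \<times> nat \<Rightarrow> nat) \<Rightarrow> (nat \<times> nat \<Rightarrow> nat) set" where
  "ASYT rho la A = {T \<in> SYT rho. \<forall>c \<in> skew rho la. T c = A c}"

definition aug_edges :: "nat list \<Rightarrow> nat list \<Rightarrow> (nat \<times> nat \<Rightarrow> nat) \<Rightarrow> nat \<Rightarrow> (nat \<times> nat \<Rightarrow> nat) set set" where
  "aug_edges rho la A i = {{T, d_tab i T} | T. T \<in> ASYT rho la A \<and> d_tab i T \<noteq> T}"

end

theory Submission
  imports Defs
begin

text \<open>A morphism carries the d_i-edge at a vertex v to the d_i-edge at phi v: a nontrivial
  d_i flips the descent signature at i - 1, i, the morphism copies this flip to v, and (ax1)
  then provides an i-edge at v, whose image must be that edge. Hence phi(V) is closed under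
  the edges of the augmented graph, and surjectivity follows once that graph is connected.

  Connectivity is proved by induction on the number n of free cells. Fillings with n in a
  fixed corner form a smaller augmented graph. To move n from a corner c' to the top corner c,
  take a cell d whose content lies strictly between theirs and which becomes a corner when c
  and c' are removed; in a filling with n - 2, n - 1, n in d, c, c' the reading word reads
  n - 1, then n - 2, then n, so d_(n-1) exchanges n - 1 and n.\<close>

lemma pos_nth: "distinct w \<Longrightarrow> k < length w \<Longrightarrow> pos w (w ! k) = k"
  unfolding pos_def by (rule Least_equality) (auto simp: nth_eq_iff_index_eq)

lemma pos_in_set: "x \<in> set w \<Longrightarrow> pos w x < length w \<and> w ! pos w x = x"
  unfolding pos_def by (rule LeastI_ex) (auto simp: in_set_conv_nth)

lemma pos_eq_imp_eq: "x \<in> set w \<Longrightarrow> y \<in> set w \<Longrightarrow> pos w x = pos w y \<Longrightarrow> x = y"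
  using pos_in_set by metis

lemma swapv_swapv [simp]: "swapv a b (swapv a b x) = x"
  by (auto simp: swapv_def)

lemma swapv_self: "swapv a a = id"
  by (auto simp: swapv_def)

lemma swapv_bij_betw: "a \<in> S \<Longrightarrow> b \<in> S \<Longrightarrow> bij_betw (swapv a b) S S"
  by (rule bij_betw_byWitness[where f'="swapv a b"]) (auto simp: swapv_def)

lemma pos_map_swapv: "pos (map (swapv a b) w) x = pos w (swapv a b x)"
proof -
  have "(k < length w \<and> map (swapv a b) w ! k = x) = (k < length w \<and> w ! k = swapv a b x)" for k
    by (metis nth_map swapv_swapv)
  then show ?thesis unfolding pos_def by simp
qed

lemma partner_cases: "partner i w \<in> {i - 1, i, i + 1}"
  unfolding partner_def Let_def by auto

lemma partner_map_swapv_partner: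
  assumes "i - 1 \<in> set w" "i \<in> set w" "i + 1 \<in> set w" "2 \<le> i"
  shows "partner i (map (swapv i (partner i w)) w) = partner i w"
proof -
  define p q r where "p = pos w (i - 1)" and "q = pos w i" and "r = pos w (i + 1)"
  have distinct: "p \<noteq> q" "q \<noteq> r" "p \<noteq> r" unfolding p_def q_def r_def
    using pos_eq_imp_eq[of "i - 1" w i] pos_eq_imp_eq[of i w "i + 1"]
      pos_eq_imp_eq[of "i - 1" w "i + 1"] assms by auto
  have partner: "partner i w = (if (p < q \<and> q < r) \<or> (r < q \<and> q < p) then i
      else if ndist q p > ndist q r then i - 1 else i + 1)"
    unfolding partner_def Let_def p_def q_def r_def by simp
  consider "partner i w = i" | "partner i w = i - 1" | "partner i w = i + 1"
    using partner by metis
  then show ?thesis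
  proof cases
    case 1
    then show ?thesis by (simp add: swapv_self)
  next
    case 2
    have between: "\<not> ((p < q \<and> q < r) \<or> (r < q \<and> q < p))" "ndist q p > ndist q r"
      using 2 partner assms(4) by (auto split: if_splits)
    have swap: "swapv i (i - 1) (i - 1) = i" "swapv i (i - 1) i = i - 1"
      "swapv i (i - 1) (i + 1) = i + 1"
      using assms(4) by (auto simp: swapv_def)
    show ?thesis
      unfolding 2 unfolding partner_def Let_def pos_map_swapv swap
      using between distinct assms(4) unfolding p_def[symmetric] q_def[symmetric] r_def[symmetric]
      by (auto simp: ndist_def split: if_splits)
  next
    case 3
    have between: "\<not> ((p < q \<and> q < r) \<or> (r < q \<and> q < p))" "\<not> ndist q p > ndist q r"
      using 3 partner assms(4) by (auto split: if_splits)
    have swap: "swapv i (i + 1) (i - 1) = i - 1" "swapv i (i + 1) i = i + 1"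
      "swapv i (i + 1) (i + 1) = i"
      using assms(4) by (auto simp: swapv_def)
    show ?thesis
      unfolding 3 unfolding partner_def Let_def pos_map_swapv swap
      using between distinct assms(4) unfolding p_def[symmetric] q_def[symmetric] r_def[symmetric]
      by (auto simp: ndist_def split: if_splits)
  qed
qed

lemma finite_diagram: "finite (diagram la)"
proof -
  have "diagram la \<subseteq> {0..sum_list la} \<times> {0..length la}"
  proof
    fix c assume "c \<in> diagram la"
    then obtain i j where c: "c = (i, j)" "1 \<le> j" "j \<le> length la" "i \<le> la ! (j - 1)"
      unfolding diagram_def by auto
    have "la ! (j - 1) \<le> sum_list la" using c by (intro member_le_sum_list) auto
    then show "c \<in> {0..sum_list la} \<times> {0..length la}" using c by auto
  qed
  then show ?thesis by (rule finite_subset) auto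
qed

lemma card_diagram: "card (diagram la) = psize la"
proof -
  have diagram: "diagram la = prod.swap ` (SIGMA j:{1..length la}. {1..la ! (j - 1)})"
    unfolding diagram_def by (auto simp: image_iff)
  have "card (diagram la) = card (SIGMA j:{1..length la}. {1..la ! (j - 1)})"
    unfolding diagram by (rule card_image) (simp add: inj_on_def)
  also have "\<dots> = (\<Sum>j\<in>{1..length la}. la ! (j - 1))" by (simp add: card_SigmaI)
  also have "\<dots> = (\<Sum>j\<in>{0..<length la}. la ! j)"
    by (rule sum.reindex_bij_witness[of _ Suc "\<lambda>j. j - 1"]) auto
  also have "\<dots> = sum_list la" by (simp add: sum_list_sum_nth)
  finally show ?thesis unfolding psize_def .
qed

lemma diagram_pos: "(i, j) \<in> diagram rho \<Longrightarrow> 1 \<le> i \<and> 1 \<le> j"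
  unfolding diagram_def by auto

definition adjacent :: "nat \<times> nat \<Rightarrow> nat \<times> nat \<Rightarrow> bool" where
  "adjacent u v \<longleftrightarrow> v = (fst u + 1, snd u) \<or> v = (fst u, snd u + 1)"

lemma adjacent_irrefl: "\<not> adjacent u u"
  by (cases u) (auto simp: adjacent_def)

lemma SYT_D:
  assumes "T \<in> SYT rho"
  shows "bij_betw T (diagram rho) {1..psize rho}" "\<And>c. c \<notin> diagram rho \<Longrightarrow> T c = 0"
  using assms unfolding SYT_def by auto

lemma SYT_adjacent_less:
  "T \<in> SYT rho \<Longrightarrow> adjacent u v \<Longrightarrow> u \<in> diagram rho \<Longrightarrow> v \<in> diagram rho \<Longrightarrow> T u < T v"
  unfolding SYT_def adjacent_def by (cases u) auto

lemma SYT_I: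
  assumes "bij_betw T (diagram rho) {1..psize rho}" "\<And>c. c \<notin> diagram rho \<Longrightarrow> T c = 0"
    "\<And>u v. adjacent u v \<Longrightarrow> u \<in> diagram rho \<Longrightarrow> v \<in> diagram rho \<Longrightarrow> T u < T v"
  shows "T \<in> SYT rho"
  unfolding SYT_def using assms by (auto simp: adjacent_def)

lemma SYT_support: "T \<in> SYT rho \<Longrightarrow> {c. T c \<noteq> 0} = diagram rho"
  using bij_betwE[OF SYT_D(1)] SYT_D(2) by fastforce

lemma linorder_sorted_key_list_of_set_eq:
  "linorder.sorted_key_list_of_set (\<le>) (f :: 'b \<Rightarrow> 'a::linorder) = sorted_key_list_of_set f"
proof -
  have "linorder.insort_key (\<le>) f x xs = insort_key f x xs" for x xs
    by (induction xs) (simp_all add: linorder.insort_key.simps[OF linorder_class.linorder_axioms])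
  then have "linorder.insort_key (\<le>) f = insort_key f" by blast
  then show ?thesis
    by (simp add: sorted_key_list_of_set_def
        linorder.sorted_key_list_of_set_def[OF linorder_class.linorder_axioms])
qed

interpretation reading_order: folding_insort_key "(\<le>)" "(<)" "UNIV :: (nat \<times> nat) set" rkey
  rewrites "linorder.sorted_key_list_of_set (\<le>) rkey = sorted_key_list_of_set rkey"
  by unfold_locales (auto simp: inj_on_def rkey_def content_def linorder_sorted_key_list_of_set_eq)

definition reading_cells :: "nat list \<Rightarrow> (nat \<times> nat) list" where
  "reading_cells rho = sorted_key_list_of_set rkey (diagram rho)"

lemma set_reading_cells: "set (reading_cells rho) = diagram rho"
  unfolding reading_cells_def by (simp add: finite_diagram)

lemma sorted_reading_cells: "sorted_wrt (<) (map rkey (reading_cells rho))"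
  unfolding reading_cells_def by simp

lemma distinct_reading_cells: "distinct (reading_cells rho)"
  using reading_order.distinct_sorted_key_list_of_set[of "diagram rho"]
  unfolding reading_cells_def by (simp add: distinct_map)

lemma reading_word_SYT: "T \<in> SYT rho \<Longrightarrow> reading_word T = map T (reading_cells rho)"
proof -
  assume "T \<in> SYT rho"
  then have "{c. T c \<noteq> 0} = diagram rho" by (rule SYT_support)
  then show ?thesis unfolding reading_word_def reading_cells_def by metis
qed

lemma set_reading_word_SYT: "T \<in> SYT rho \<Longrightarrow> set (reading_word T) = {1..psize rho}"
  using SYT_D(1)[of T rho] by (simp add: reading_word_SYT set_reading_cells bij_betw_def)

lemma distinct_reading_word_SYT: "T \<in> SYT rho \<Longrightarrow> distinct (reading_word T)"
  using SYT_D(1)[of T rho]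
  by (simp add: reading_word_SYT set_reading_cells distinct_reading_cells bij_betw_def distinct_map)

lemma pos_reading_word_less_iff:
  assumes T: "T \<in> SYT rho" and u: "u \<in> diagram rho" and v: "v \<in> diagram rho"
  shows "pos (reading_word T) (T u) < pos (reading_word T) (T v) \<longleftrightarrow> rkey u < rkey v"
proof -
  let ?L = "reading_cells rho"
  obtain ku kv where k: "ku < length ?L" "?L ! ku = u" "kv < length ?L" "?L ! kv = v"
    using u v set_reading_cells by (metis in_set_conv_nth)
  have pos: "pos (reading_word T) (T u) = ku" "pos (reading_word T) (T v) = kv"
    using pos_nth[OF distinct_reading_word_SYT[OF T], of ku] pos_nth[OF distinct_reading_word_SYT[OF T], of kv] k
    by (simp_all add: reading_word_SYT[OF T])
  have "ku < kv \<Longrightarrow> rkey u < rkey v" "kv < ku \<Longrightarrow> rkey v < rkey u"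
    using sorted_wrt_nth_less[OF sorted_reading_cells] k by force+
  then show ?thesis unfolding pos using k by (metis less_asym linorder_neqE_nat order_less_irrefl)
qed

lemma rkey_less_if_content_less: "content u < content v \<Longrightarrow> rkey u < rkey v"
  unfolding rkey_def by (simp add: less_prod_def')

lemma reading_word_comp:
  assumes "\<And>x. f x = 0 \<longleftrightarrow> x = 0"
  shows "reading_word (\<lambda>c. f (T c)) = map f (reading_word T)"
  unfolding reading_word_def using assms by simp

section \<open>The elementary dual equivalences on standard tableaux\<close>

lemma d_tab_involution:
  assumes T: "T \<in> SYT rho" and i: "2 \<le> i" "i + 1 \<le> psize rho"
  shows "d_tab i (d_tab i T) = T"
proof -
  define j where "j = partner i (reading_word T)"
  have j: "j \<in> {i - 1, i, i + 1}" unfolding j_def by (rule partner_cases)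
  have dT: "d_tab i T = (\<lambda>c. swapv i j (T c))" unfolding d_tab_def j_def by simp
  have "swapv i j x = 0 \<longleftrightarrow> x = 0" for x using j i by (auto simp: swapv_def)
  then have word: "reading_word (d_tab i T) = map (swapv i j) (reading_word T)"
    unfolding dT by (rule reading_word_comp)
  have "i - 1 \<in> set (reading_word T)" "i \<in> set (reading_word T)" "i + 1 \<in> set (reading_word T)"
    using set_reading_word_SYT[OF T] i by auto
  then have "partner i (reading_word (d_tab i T)) = j"
    unfolding word j_def using i(1) by (rule partner_map_swapv_partner)
  then show ?thesis unfolding d_tab_def[of i "d_tab i T"] by (simp add: dT)
qed

text \<open>d_i moves T only when i is not between i - 1 and i + 1 in the reading word.\<close>
lemma desc_sig_flip_if_d_tab_moves:
  assumes T: "T \<in> SYT rho" and i: "2 \<le> i" "i + 1 \<le> psize rho" and moves: "d_tab i T \<noteq> T"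
  shows "desc_sig T (i - 1) = - desc_sig T i"
proof -
  let ?w = "reading_word T"
  define p q r where "p = pos ?w (i - 1)" and "q = pos ?w i" and "r = pos ?w (i + 1)"
  have "i - 1 \<in> set ?w" "i \<in> set ?w" "i + 1 \<in> set ?w"
    using set_reading_word_SYT[OF T] i by auto
  then have distinct: "p \<noteq> q" "q \<noteq> r" "p \<noteq> r" unfolding p_def q_def r_def
    using pos_eq_imp_eq[of "i - 1" ?w i] pos_eq_imp_eq[of i ?w "i + 1"]
      pos_eq_imp_eq[of "i - 1" ?w "i + 1"] i by auto
  have "partner i ?w \<noteq> i"
  proof
    assume "partner i ?w = i"
    then have "d_tab i T = T" unfolding d_tab_def by (simp add: swapv_self)
    with moves show False by simp
  qed
  then have "\<not> ((p < q \<and> q < r) \<or> (r < q \<and> q < p))"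
    unfolding partner_def Let_def p_def q_def r_def by auto
  moreover have succ: "i - 1 + 1 = i" using i by simp
  ultimately show ?thesis
    unfolding desc_sig_def succ using distinct
    unfolding p_def[symmetric] q_def[symmetric] r_def[symmetric] by auto
qed

lemma swapv_succ_SYT:
  assumes T: "T \<in> SYT rho" and a: "1 \<le> a" "a + 1 \<le> psize rho"
    and not_adjacent: "\<And>u v. adjacent u v \<Longrightarrow> u \<in> diagram rho \<Longrightarrow> v \<in> diagram rho \<Longrightarrow>
      \<not> (T u = a \<and> T v = a + 1)"
  shows "(\<lambda>x. swapv a (a + 1) (T x)) \<in> SYT rho"
proof (rule SYT_I)
  have "bij_betw (swapv a (a + 1) \<circ> T) (diagram rho) {1..psize rho}"
    using bij_betw_trans[OF SYT_D(1)[OF T] swapv_bij_betw[of a "{1..psize rho}" "a + 1"]] a by auto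
  then show "bij_betw (\<lambda>x. swapv a (a + 1) (T x)) (diagram rho) {1..psize rho}"
    by (simp add: comp_def)
  show "swapv a (a + 1) (T c) = 0" if "c \<notin> diagram rho" for c
    using SYT_D(2)[OF T that] a by (auto simp: swapv_def)
  show "swapv a (a + 1) (T u) < swapv a (a + 1) (T v)"
    if "adjacent u v" "u \<in> diagram rho" "v \<in> diagram rho" for u v
    using SYT_adjacent_less[OF T that] not_adjacent[OF that] by (auto simp: swapv_def)
qed

text \<open>When i is read first, then i - 1, then i + 1, the letter i + 1 is farther from i,
  so d_i exchanges i and i + 1.\<close>
lemma d_tab_eq_swapv_succ:
  assumes T: "T \<in> SYT rho" and i: "2 \<le> i"
    and u: "u \<in> diagram rho" "T u = i - 1" and w: "w \<in> diagram rho" "T w = i"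
    and z: "z \<in> diagram rho" "T z = i + 1"
    and order: "rkey w < rkey u" "rkey u < rkey z"
  shows "d_tab i T = (\<lambda>x. swapv i (i + 1) (T x))"
proof -
  let ?w = "reading_word T"
  have "pos ?w (T w) < pos ?w (T u)" "pos ?w (T u) < pos ?w (T z)"
    using pos_reading_word_less_iff[OF T w(1) u(1)] pos_reading_word_less_iff[OF T u(1) z(1)] order
    by simp_all
  then have "partner i ?w = i + 1"
    unfolding partner_def Let_def using u w z by (auto simp: ndist_def)
  then show ?thesis unfolding d_tab_def by simp
qed

section \<open>Down-closed sets of cells and their corners\<close>

definition down_closed :: "(nat \<times> nat) set \<Rightarrow> bool" where
  "down_closed D \<longleftrightarrow> (\<forall>i j. (i, j) \<in> D \<longrightarrow> 1 \<le> i \<and> 1 \<le> j \<and>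
     (\<forall>i' j'. 1 \<le> i' \<and> i' \<le> i \<and> 1 \<le> j' \<and> j' \<le> j \<longrightarrow> (i', j') \<in> D))"

lemma down_closedD:
  "down_closed D \<Longrightarrow> (i, j) \<in> D \<Longrightarrow> 1 \<le> i' \<Longrightarrow> i' \<le> i \<Longrightarrow> 1 \<le> j' \<Longrightarrow> j' \<le> j \<Longrightarrow> (i', j') \<in> D"
  unfolding down_closed_def by blast

lemma down_closed_pos: "down_closed D \<Longrightarrow> (i, j) \<in> D \<Longrightarrow> 1 \<le> i \<and> 1 \<le> j"
  unfolding down_closed_def by blast

lemma down_closed_adjacent:
  assumes "down_closed D" "adjacent u v" "v \<in> D" "u \<in> diagram rho"
  shows "u \<in> D"
  using assms down_closedD[OF assms(1), of "fst v" "snd v" "fst u" "snd u"] diagram_pos[of "fst u" "snd u"]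
  unfolding adjacent_def by auto

lemma down_closed_diagram:
  assumes "is_partition la"
  shows "down_closed (diagram la)"
  unfolding down_closed_def
proof (intro allI impI)
  fix i j assume "(i, j) \<in> diagram la"
  then have ij: "1 \<le> j" "j \<le> length la" "1 \<le> i" "i \<le> la ! (j - 1)" unfolding diagram_def by auto
  have "(i', j') \<in> diagram la" if h: "1 \<le> i' \<and> i' \<le> i \<and> 1 \<le> j' \<and> j' \<le> j" for i' j'
  proof -
    have sorted: "sorted_wrt (\<ge>) la" using assms unfolding is_partition_def by simp
    have "la ! (j - 1) \<le> la ! (j' - 1)"
    proof (cases "j' = j")
      case False
      then have "j' - 1 < j - 1" using h by auto
      then show ?thesis using sorted_wrt_nth_less[OF sorted, of "j' - 1" "j - 1"] ij by auto
    qed simp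
    then show ?thesis using h ij unfolding diagram_def by auto
  qed
  with ij show "1 \<le> i \<and> 1 \<le> j \<and> (\<forall>i' j'. 1 \<le> i' \<and> i' \<le> i \<and> 1 \<le> j' \<and> j' \<le> j \<longrightarrow> (i', j') \<in> diagram la)"
    by blast
qed

definition corner :: "(nat \<times> nat) set \<Rightarrow> nat \<times> nat \<Rightarrow> bool" where
  "corner D c \<longleftrightarrow> c \<in> D \<and> (fst c + 1, snd c) \<notin> D \<and> (fst c, snd c + 1) \<notin> D"

lemma corner_adjacent_notin: "corner D u \<Longrightarrow> adjacent u v \<Longrightarrow> v \<notin> D"
  by (auto simp: corner_def adjacent_def)

lemma down_closed_Diff_corner:
  assumes D: "down_closed D" and c: "corner D c"
  shows "down_closed (D - {c})"
  unfolding down_closed_def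
proof (intro allI impI)
  fix i j assume ij: "(i, j) \<in> D - {c}"
  have "(i', j') \<in> D - {c}" if h: "1 \<le> i' \<and> i' \<le> i \<and> 1 \<le> j' \<and> j' \<le> j" for i' j'
  proof
    show "(i', j') \<in> D" using down_closedD[OF D, of i j i' j'] ij h by auto
    show "(i', j') \<notin> {c}"
    proof
      assume "(i', j') \<in> {c}"
      then have e: "(i', j') = c" by simp
      with ij h have "i' < i \<or> j' < j" by auto
      then have "(i' + 1, j') \<in> D \<or> (i', j' + 1) \<in> D"
        using down_closedD[OF D, of i j "i' + 1" j'] down_closedD[OF D, of i j i' "j' + 1"] ij h by auto
      with c e show False unfolding corner_def by auto
    qed
  qed
  with down_closed_pos[OF D, of i j] ij
  show "1 \<le> i \<and> 1 \<le> j \<and> (\<forall>i' j'. 1 \<le> i' \<and> i' \<le> i \<and> 1 \<le> j' \<and> j' \<le> j \<longrightarrow> (i', j') \<in> D - {c})"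
    by blast
qed

lemma finite_row: "finite D \<Longrightarrow> finite {i. (i, j) \<in> D}"
  by (rule finite_subset[of _ "fst ` D"]) force+

lemma top_corner_exists:
  assumes fin: "finite D" and ne: "D \<noteq> {}"
  obtains x k where "corner D (x, k)" "\<And>i j. (i, j) \<in> D \<Longrightarrow> j \<le> k" "\<And>i. (i, k) \<in> D \<Longrightarrow> i \<le> x"
proof -
  define k where "k = Max (snd ` D)"
  have "k \<in> snd ` D" unfolding k_def using fin ne by (intro Max_in) auto
  then have row_ne: "{i. (i, k) \<in> D} \<noteq> {}" by force
  define x where "x = Max {i. (i, k) \<in> D}"
  have top: "j \<le> k" if "(i, j) \<in> D" for i j
    unfolding k_def using fin that by (intro Max_ge) force+
  have right: "i \<le> x" if "(i, k) \<in> D" for i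
    unfolding x_def using finite_row[OF fin] that by (intro Max_ge) auto
  have "(x, k) \<in> D" unfolding x_def using Max_in[OF finite_row[OF fin] row_ne] by simp
  then have "corner D (x, k)"
    unfolding corner_def using top[of x "k + 1"] right[of "x + 1"] by auto
  then show ?thesis using top right by (rule that)
qed

lemma corner_below_right_of_top_corner:
  assumes dc: "down_closed D" and c: "corner D (x, k)"
    and top: "\<And>i j. (i, j) \<in> D \<Longrightarrow> j \<le> k" and right: "\<And>i. (i, k) \<in> D \<Longrightarrow> i \<le> x"
    and c': "corner D (a, y)" and ne: "(a, y) \<noteq> (x, k)"
  shows "y < k" "x < a"
proof -
  have cD: "(x, k) \<in> D" and c'D: "(a, y) \<in> D" using c c' unfolding corner_def by auto
  have pos: "1 \<le> a" "1 \<le> y" "1 \<le> x" "1 \<le> k"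
    using down_closed_pos[OF dc c'D] down_closed_pos[OF dc cD] by auto
  have c'_out: "(a + 1, y) \<notin> D" "(a, y + 1) \<notin> D" using c' unfolding corner_def by auto
  have "y \<noteq> k"
  proof
    assume "y = k"
    then have "a < x" using right c'D ne by fastforce
    then have "(a + 1, k) \<in> D" using down_closedD[OF dc cD, of "a + 1" k] pos by auto
    with c'_out \<open>y = k\<close> show False by simp
  qed
  with top[OF c'D] show yk: "y < k" by simp
  show "x < a"
  proof (rule ccontr)
    assume "\<not> x < a"
    then have "(a, k) \<in> D" using down_closedD[OF dc cD, of a k] pos by auto
    then have "(a, y + 1) \<in> D" using down_closedD[OF dc, of a k a "y + 1"] pos yk by auto
    with c'_out show False by simp
  qed
qed

text \<open>The cell d becomes a corner once both corners are removed.\<close>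
lemma cell_between_corners:
  assumes dc: "down_closed D" and fin: "finite D" and c: "corner D (x, k)"
    and top: "\<And>i j. (i, j) \<in> D \<Longrightarrow> j \<le> k" and right: "\<And>i. (i, k) \<in> D \<Longrightarrow> i \<le> x"
    and c': "corner D (a, y)" and ne: "(a, y) \<noteq> (x, k)"
  obtains d where "d \<in> D" "d \<noteq> (x, k)" "d \<noteq> (a, y)"
    "\<And>v. adjacent d v \<Longrightarrow> v \<in> D \<Longrightarrow> v = (x, k) \<or> v = (a, y)"
    "content (x, k) < content d" "content d < content (a, y)"
proof -
  have cD: "(x, k) \<in> D" and c'D: "(a, y) \<in> D" using c c' unfolding corner_def by auto
  have pos: "1 \<le> a" "1 \<le> y" "1 \<le> x" "1 \<le> k"
    using down_closed_pos[OF dc c'D] down_closed_pos[OF dc cD] by auto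
  have c'_out: "(a + 1, y) \<notin> D" using c' unfolding corner_def by auto
  have yk: "y < k" using top right by (rule corner_below_right_of_top_corner(1)[OF dc c _ _ c' ne])
  have xa: "x < a" using top right by (rule corner_below_right_of_top_corner(2)[OF dc c _ _ c' ne])
  show ?thesis
  proof (cases "y + 1 = k")
    case True
    define d where "d = (a - 1, y)"
    show ?thesis
    proof (rule that[of d])
      show "d \<in> D" unfolding d_def using down_closedD[OF dc c'D, of "a - 1" y] pos xa by auto
      show "d \<noteq> (x, k)" "d \<noteq> (a, y)" unfolding d_def using True xa pos by auto
      show "v = (x, k) \<or> v = (a, y)" if "adjacent d v" "v \<in> D" for v
      proof -
        have "v = (a, y) \<or> v = (a - 1, k)" using that(1) True xa pos unfolding adjacent_def d_def by auto
        moreover have "a - 1 \<le> x" if "(a - 1, k) \<in> D" using right[OF that] .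
        ultimately show ?thesis using that(2) xa by auto
      qed
      show "content (x, k) < content d" "content d < content (a, y)"
        unfolding d_def content_def using True xa pos by auto
    qed
  next
    case False
    with yk have yk1: "y + 1 < k" by simp
    define e where "e = Max {i. (i, k - 1) \<in> D}"
    have xk1: "(x, k - 1) \<in> D" using down_closedD[OF dc cD, of x "k - 1"] pos yk1 by auto
    have eD: "(e, k - 1) \<in> D" unfolding e_def using Max_in[OF finite_row[OF fin]] xk1 by auto
    have e_max: "i \<le> e" if "(i, k - 1) \<in> D" for i
      unfolding e_def using finite_row[OF fin] that by (intro Max_ge) auto
    have xe: "x \<le> e" using e_max[OF xk1] .
    have ea: "e \<le> a"
    proof (rule ccontr)
      assume "\<not> e \<le> a"
      then have "(a + 1, y) \<in> D" using down_closedD[OF dc eD, of "a + 1" y] pos yk1 by auto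
      with c'_out show False by simp
    qed
    show ?thesis
    proof (rule that[of "(e, k - 1)"])
      show "(e, k - 1) \<noteq> (x, k)" "(e, k - 1) \<noteq> (a, y)" using yk1 by auto
      show "v = (x, k) \<or> v = (a, y)" if "adjacent (e, k - 1) v" "v \<in> D" for v
      proof -
        have "v = (e + 1, k - 1) \<or> v = (e, k)" using that(1) yk1 unfolding adjacent_def by auto
        moreover have "v \<noteq> (e + 1, k - 1)" using e_max[of "e + 1"] that(2) by auto
        ultimately show ?thesis using right[of e] that(2) xe by auto
      qed
      show "content (x, k) < content (e, k - 1)" "content (e, k - 1) < content (a, y)"
        unfolding content_def using yk1 xe ea pos by auto
    qed (fact eD)
  qed
qed

definition SYT_extending :: "nat list \<Rightarrow> (nat \<times> nat) set \<Rightarrow> (nat \<times> nat \<Rightarrow> nat) \<Rightarrow> (nat \<times> nat \<Rightarrow> nat) set" where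
  "SYT_extending rho D B = {T \<in> SYT rho. \<forall>x \<in> diagram rho - D. T x = B x}"

definition increasing_off :: "nat list \<Rightarrow> (nat \<times> nat) set \<Rightarrow> (nat \<times> nat \<Rightarrow> nat) \<Rightarrow> bool" where
  "increasing_off rho D B \<longleftrightarrow>
     (\<forall>u v. adjacent u v \<and> u \<in> diagram rho - D \<and> v \<in> diagram rho - D \<longrightarrow> B u < B v)"

lemma SYT_extending_SYT: "X \<in> SYT_extending rho D B \<Longrightarrow> X \<in> SYT rho"
  unfolding SYT_extending_def by simp

lemma SYT_extending_increasing_off:
  assumes X: "X \<in> SYT_extending rho D B"
  shows "increasing_off rho D B"
  unfolding increasing_off_def
proof (intro allI impI)
  fix u v assume h: "adjacent u v \<and> u \<in> diagram rho - D \<and> v \<in> diagram rho - D"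
  then have "X u < X v" using SYT_adjacent_less[OF SYT_extending_SYT[OF X]] by blast
  moreover have "X u = B u" "X v = B v" using X h unfolding SYT_extending_def by blast+
  ultimately show "B u < B v" by simp
qed

lemma SYT_extending_fun_upd:
  "X \<in> SYT_extending rho D B \<Longrightarrow> X c = m \<Longrightarrow> X \<in> SYT_extending rho (D - {c}) (B(c := m))"
  unfolding SYT_extending_def by auto

lemma SYT_extending_mono:
  assumes "X \<in> SYT_extending rho D B" "D \<subseteq> D'" "\<And>x. x \<in> diagram rho - D' \<Longrightarrow> B x = B' x"
  shows "X \<in> SYT_extending rho D' B'"
  unfolding SYT_extending_def
proof (intro CollectI conjI ballI)
  show "X \<in> SYT rho" using assms(1) by (rule SYT_extending_SYT)
  fix x assume x: "x \<in> diagram rho - D'"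
  then have "X x = B x" using assms(1,2) unfolding SYT_extending_def by blast
  then show "X x = B' x" using assms(3)[OF x] by simp
qed

lemma SYT_extending_empty:
  assumes "X \<in> SYT_extending rho {} B" "X' \<in> SYT_extending rho {} B"
  shows "X = X'"
proof
  fix x
  show "X x = X' x"
  proof (cases "x \<in> diagram rho")
    case True
    then show ?thesis using assms unfolding SYT_extending_def by auto
  next
    case False
    then show ?thesis using SYT_D(2)[OF SYT_extending_SYT[OF assms(1)]] SYT_D(2)[OF SYT_extending_SYT[OF assms(2)]]
      by simp
  qed
qed

lemma bij_betw_fun_upd_insert:
  fixes m N :: nat
  assumes "bij_betw B S {m + 1..N}" "c \<notin> S" "m \<le> N"
  shows "bij_betw (B(c := m)) (insert c S) {m..N}"
proof -
  have "B a = (B(c := m)) a" if "a \<in> S" for a using assms(2) that by auto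
  then have "bij_betw (B(c := m)) S {m + 1..N}"
    using assms(1) bij_betw_cong[of S B "B(c := m)"] by simp
  moreover have "(B(c := m)) c \<notin> {m + 1..N}" by auto
  ultimately have "bij_betw (B(c := m)) (S \<union> {c}) ({m + 1..N} \<union> {(B(c := m)) c})"
    using notIn_Un_bij_betw3[of c S "B(c := m)" "{m + 1..N}"] assms(2) by blast
  moreover have "{m + 1..N} \<union> {m} = {m..N}" using assms(3) by auto
  ultimately show ?thesis by simp
qed

lemma bij_betw_atLeast_less:
  fixes n :: nat
  shows "bij_betw B S {n + 1..N} \<Longrightarrow> x \<in> S \<Longrightarrow> n < B x"
  using bij_betwE by fastforce

text \<open>The new values on P are at most n, those outside D exceed n, and D is down-closed, so
  no adjacent pair can decrease across the boundary of P.\<close>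
lemma increasing_off_update:
  assumes inc: "increasing_off rho D B" and dc: "down_closed D" and P: "P \<subseteq> D"
    and big: "\<And>x. x \<in> diagram rho - D \<Longrightarrow> n < B x"
    and off_P: "\<And>x. x \<notin> P \<Longrightarrow> B' x = B x" and on_P: "\<And>x. x \<in> P \<Longrightarrow> B' x \<le> n"
    and inc_P: "\<And>u v. adjacent u v \<Longrightarrow> u \<in> P \<Longrightarrow> v \<in> P \<Longrightarrow> B' u < B' v"
  shows "increasing_off rho (D - P) B'"
  unfolding increasing_off_def
proof (intro allI impI)
  fix u v assume h: "adjacent u v \<and> u \<in> diagram rho - (D - P) \<and> v \<in> diagram rho - (D - P)"
  show "B' u < B' v"
  proof (cases "u \<in> P"; cases "v \<in> P")
    assume "u \<in> P" "v \<notin> P"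
    then show ?thesis using h big[of v] on_P off_P by fastforce
  next
    assume "u \<notin> P" "v \<in> P"
    then show ?thesis using h P down_closed_adjacent[OF dc, of u v rho] by auto
  next
    assume "u \<notin> P" "v \<notin> P"
    moreover have "B u < B v" using calculation h inc unfolding increasing_off_def by blast
    ultimately show ?thesis using off_P by simp
  qed (use h inc_P in auto)
qed

lemma SYT_extending_nonempty:
  "finite D \<Longrightarrow> down_closed D \<Longrightarrow> D \<subseteq> diagram rho \<Longrightarrow> card D = m \<Longrightarrow>
   bij_betw B (diagram rho - D) {m + 1..psize rho} \<Longrightarrow> increasing_off rho D B \<Longrightarrow>
   SYT_extending rho D B \<noteq> {}"
proof (induction m arbitrary: D B)
  case 0
  then have D: "D = {}" by simp
  define T where "T = (\<lambda>x. if x \<in> diagram rho then B x else 0)"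
  have "T \<in> SYT rho"
  proof (rule SYT_I)
    show "bij_betw T (diagram rho) {1..psize rho}"
      using 0 D bij_betw_cong[of "diagram rho" T B] unfolding T_def by simp
    show "T c = 0" if "c \<notin> diagram rho" for c unfolding T_def using that by simp
    show "T u < T v" if "adjacent u v" "u \<in> diagram rho" "v \<in> diagram rho" for u v
    proof -
      have "B u < B v" using 0 D that unfolding increasing_off_def by blast
      then show ?thesis unfolding T_def using that by simp
    qed
  qed
  then have "T \<in> SYT_extending rho D B" unfolding SYT_extending_def T_def by simp
  then show ?case by blast
next
  case (Suc m)
  obtain x k where c: "corner D (x, k)"
    using top_corner_exists[of D] Suc.prems(1,4) by (metis card.empty nat.distinct(1))
  let ?c = "(x, k)" and ?B = "B((x, k) := m + 1)"
  have cD: "?c \<in> D" using c unfolding corner_def by simp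
  have "card D \<le> psize rho"
    using card_mono[OF finite_diagram Suc.prems(3)] card_diagram by simp
  then have "bij_betw ?B (insert ?c (diagram rho - D)) {m + 1..psize rho}"
    using bij_betw_fun_upd_insert[of B "diagram rho - D" "m + 1" "psize rho" ?c] Suc.prems(4,5) cD
    by simp
  moreover have "insert ?c (diagram rho - D) = diagram rho - (D - {?c})"
    using cD Suc.prems(3) by auto
  ultimately have bij: "bij_betw ?B (diagram rho - (D - {?c})) {m + 1..psize rho}" by simp
  have inc: "increasing_off rho (D - {?c}) ?B"
  proof (rule increasing_off_update[where n = "m + 1"])
    show "m + 1 < B y" if "y \<in> diagram rho - D" for y
      using bij_betw_atLeast_less[OF Suc.prems(5) that] by simp
  qed (use Suc.prems(2,6) cD adjacent_irrefl in auto)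
  have "SYT_extending rho (D - {?c}) ?B \<noteq> {}"
  proof (rule Suc.IH)
    show "finite (D - {?c})" "D - {?c} \<subseteq> diagram rho" "card (D - {?c}) = m"
      using Suc.prems cD by auto
    show "down_closed (D - {?c})" using down_closed_Diff_corner[OF Suc.prems(2) c] .
  qed (fact bij, fact inc)
  then show ?case using cD unfolding SYT_extending_def by auto
qed

lemma SYT_extending_max_at_corner:
  assumes X: "X \<in> SYT_extending rho D B" and bij: "bij_betw B (diagram rho - D) {n + 1..psize rho}"
    and sub: "D \<subseteq> diagram rho" and n: "1 \<le> n" "n \<le> psize rho"
  obtains c where "corner D c" "X c = n"
proof -
  have XS: "X \<in> SYT rho" using X by (rule SYT_extending_SYT)
  have X_off: "X x = B x" if "x \<in> diagram rho - D" for x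
    using X that unfolding SYT_extending_def by blast
  have X_le: "X x \<le> n" if "x \<in> D" for x
  proof (rule ccontr)
    assume "\<not> X x \<le> n"
    moreover have "X x \<in> {1..psize rho}" using bij_betwE[OF SYT_D(1)[OF XS]] sub that by blast
    ultimately obtain y where y: "y \<in> diagram rho - D" "B y = X x"
      using bij_betw_imp_surj_on[OF bij] by (metis (no_types, lifting) atLeastAtMost_iff image_iff
          not_less_eq_eq Suc_eq_plus1)
    then have "y = x"
      using X_off[OF y(1)] sub that bij_betw_imp_inj_on[OF SYT_D(1)[OF XS]] unfolding inj_on_def by auto
    with y that show False by simp
  qed
  obtain c where c: "c \<in> diagram rho" "X c = n"
    using bij_betw_imp_surj_on[OF SYT_D(1)[OF XS]] n by (metis atLeastAtMost_iff imageE)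
  have cD: "c \<in> D"
  proof (rule ccontr)
    assume "c \<notin> D"
    then have "c \<in> diagram rho - D" using c by simp
    then have "X c = B c" "n < B c" using X_off bij_betw_atLeast_less[OF bij] by blast+
    with c show False by simp
  qed
  have "v \<notin> D" if "adjacent c v" for v
    using SYT_adjacent_less[OF XS that] X_le[of v] c sub by auto
  then have "corner D c" unfolding corner_def adjacent_def using cD by auto
  with c show ?thesis by (intro that)
qed

lemma three_cell_filling_exists:
  assumes fin: "finite D" and dc: "down_closed D" and sub: "D \<subseteq> diagram rho" and card: "card D = n"
    and bij: "bij_betw B (diagram rho - D) {n + 1..psize rho}" and inc: "increasing_off rho D B"
    and c: "corner D c" and c': "corner D c'" and ne: "c \<noteq> c'"
    and d: "d \<in> D" "d \<noteq> c" "d \<noteq> c'"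
    and d_adj: "\<And>v. adjacent d v \<Longrightarrow> v \<in> D \<Longrightarrow> v = c \<or> v = c'"
  obtains S where "S \<in> SYT_extending rho (D - {c', c, d}) (B(c' := n, c := n - 1, d := n - 2))"
proof -
  let ?B = "B(c' := n, c := n - 1, d := n - 2)"
  have cD: "c \<in> D" and c'D: "c' \<in> D" using c c' unfolding corner_def by auto
  have "card {c', c, d} \<le> card D" using card_mono[OF fin] c'D cD d by simp
  then have n3: "3 \<le> n" using card ne d by simp
  have nN: "n \<le> psize rho" using card_mono[OF finite_diagram sub] card card_diagram by simp
  have succ: "n - 1 + 1 = n" "n - 2 + 1 = n - 1" "n - 3 + 1 = n - 2" using n3 by auto
  have "bij_betw (B(c' := n)) (insert c' (diagram rho - D)) {n..psize rho}"
    by (rule bij_betw_fun_upd_insert[OF bij]) (use c'D nN in auto)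
  then have "bij_betw (B(c' := n, c := n - 1)) (insert c (insert c' (diagram rho - D))) {n - 1..psize rho}"
    using bij_betw_fun_upd_insert[of "B(c' := n)" _ "n - 1", unfolded succ] cD ne nN by simp
  then have "bij_betw ?B (insert d (insert c (insert c' (diagram rho - D)))) {n - 2..psize rho}"
    using bij_betw_fun_upd_insert[of "B(c' := n, c := n - 1)" _ "n - 2", unfolded succ] d ne nN
    by simp
  moreover have "insert d (insert c (insert c' (diagram rho - D))) = diagram rho - (D - {c', c, d})"
    using sub cD c'D d by auto
  ultimately have bij3: "bij_betw ?B (diagram rho - (D - {c', c, d})) {(n - 3) + 1..psize rho}"
    unfolding succ by simp
  have "increasing_off rho (D - {c', c, d}) ?B"
  proof (rule increasing_off_update[OF inc dc, where n = n])
    show "{c', c, d} \<subseteq> D" using c'D cD d by simp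
    show "n < B x" if "x \<in> diagram rho - D" for x
      using bij_betw_atLeast_less[OF bij that] .
    show "?B u < ?B v" if "adjacent u v" "u \<in> {c', c, d}" "v \<in> {c', c, d}" for u v
    proof -
      have "u = d"
        using that corner_adjacent_notin[OF c] corner_adjacent_notin[OF c'] c'D cD d by blast
      then show ?thesis using that adjacent_irrefl[of d] n3 ne d by auto
    qed
  qed (use ne d in auto)
  moreover have "D - {c', c, d} = D - {c'} - {c} - {d}" by auto
  moreover have "down_closed (D - {c'} - {c} - {d})"
  proof (intro down_closed_Diff_corner)
    show "corner (D - {c'}) c" "corner (D - {c'} - {c}) d"
      using c ne d d_adj unfolding corner_def adjacent_def by auto
  qed (fact dc, fact c')
  moreover have "card (D - {c', c, d}) = n - 3"
    using fin card cD c'D d ne by (simp add: card_Diff_subset)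
  ultimately have "SYT_extending rho (D - {c', c, d}) ?B \<noteq> {}"
    using SYT_extending_nonempty[of "D - {c', c, d}" rho "n - 3" ?B] fin sub bij3 nN by auto
  then show ?thesis using that by blast
qed

section \<open>Connectivity of the augmented dual equivalence graph\<close>

definition dual_step :: "nat list \<Rightarrow> nat \<Rightarrow> ((nat \<times> nat \<Rightarrow> nat) \<times> (nat \<times> nat \<Rightarrow> nat)) set" where
  "dual_step rho m = {(X, d_tab i X) | X i.
     X \<in> SYT rho \<and> 1 < i \<and> i < m \<and> i + 1 \<le> psize rho \<and> d_tab i X \<noteq> X}"

abbreviation dual_connected :: "nat list \<Rightarrow> nat \<Rightarrow> ((nat \<times> nat \<Rightarrow> nat) \<times> (nat \<times> nat \<Rightarrow> nat)) set" where
  "dual_connected rho m \<equiv> (dual_step rho m \<union> (dual_step rho m)\<inverse>)\<^sup>*"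

lemma dual_connected_mono:
  assumes "m \<le> m'"
  shows "dual_connected rho m \<subseteq> dual_connected rho m'"
proof -
  have "dual_step rho m \<subseteq> dual_step rho m'" unfolding dual_step_def using assms by fastforce
  then show ?thesis by (intro rtrancl_mono) blast
qed

lemma dual_connected_sym: "(X, Y) \<in> dual_connected rho m \<Longrightarrow> (Y, X) \<in> dual_connected rho m"
  using sym_rtrancl[OF sym_Un_converse] by (rule symD)

lemma dual_step_swapping_max:
  assumes S: "S \<in> SYT rho" and n: "3 \<le> n" "n \<le> psize rho"
    and cells: "c' \<in> diagram rho" "c \<in> diagram rho" "d \<in> diagram rho"
    and entries: "S c' = n" "S c = n - 1" "S d = n - 2"
    and not_adjacent: "\<not> adjacent c c'"
    and between: "content c < content d" "content d < content c'"
  shows "(\<lambda>x. swapv (n - 1) n (S x)) \<in> SYT rho" "(S, \<lambda>x. swapv (n - 1) n (S x)) \<in> dual_step rho n"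
proof -
  have succ: "n - 1 + 1 = n" using n by simp
  show SYT: "(\<lambda>x. swapv (n - 1) n (S x)) \<in> SYT rho"
  proof (rule swapv_succ_SYT[OF S, where a = "n - 1", unfolded succ])
    show "1 \<le> n - 1" "n \<le> psize rho" using n by auto
    show "\<not> (S u = n - 1 \<and> S v = n)" if "adjacent u v" "u \<in> diagram rho" "v \<in> diagram rho" for u v
    proof
      assume "S u = n - 1 \<and> S v = n"
      then have "S u = S c" "S v = S c'" using entries by auto
      then have "u = c" "v = c'"
        using bij_betw_imp_inj_on[OF SYT_D(1)[OF S]] that cells unfolding inj_on_def by auto
      with not_adjacent that(1) show False by simp
    qed
  qed
  have "d_tab (n - 1) S = (\<lambda>x. swapv (n - 1) (n - 1 + 1) (S x))"
    using rkey_less_if_content_less[OF between(1)] rkey_less_if_content_less[OF between(2)]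
    by (intro d_tab_eq_swapv_succ[OF S, where u = d and w = c and z = c']) (use cells entries n in auto)
  then have d_tab: "d_tab (n - 1) S = (\<lambda>x. swapv (n - 1) n (S x))" unfolding succ .
  moreover have "swapv (n - 1) n (S c) \<noteq> S c" using entries n by (simp add: swapv_def)
  then have "(\<lambda>x. swapv (n - 1) n (S x)) \<noteq> S" by (metis (mono_tags))
  ultimately show "(S, \<lambda>x. swapv (n - 1) n (S x)) \<in> dual_step rho n"
    unfolding dual_step_def using S n by (intro CollectI exI[of _ S] exI[of _ "n - 1"]) auto
qed

lemma dual_step_moves_max_between_corners:
  assumes fin: "finite D" and dc: "down_closed D" and sub: "D \<subseteq> diagram rho" and card: "card D = n"
    and bij: "bij_betw B (diagram rho - D) {n + 1..psize rho}" and inc: "increasing_off rho D B"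
    and c: "corner D c" and c': "corner D c'" and ne: "c \<noteq> c'"
    and d: "d \<in> D" "d \<noteq> c" "d \<noteq> c'"
    and d_adj: "\<And>v. adjacent d v \<Longrightarrow> v \<in> D \<Longrightarrow> v = c \<or> v = c'"
    and between: "content c < content d" "content d < content c'"
  obtains S S' where "S \<in> SYT_extending rho (D - {c'}) (B(c' := n))"
    "S' \<in> SYT_extending rho (D - {c}) (B(c := n))" "(S, S') \<in> dual_step rho n"
proof -
  obtain S where S: "S \<in> SYT_extending rho (D - {c', c, d}) (B(c' := n, c := n - 1, d := n - 2))"
    using three_cell_filling_exists[OF fin dc sub card bij inc c c' ne d d_adj] .
  have SS: "S \<in> SYT rho" using S by (rule SYT_extending_SYT)
  have cD: "c \<in> D" and c'D: "c' \<in> D" using c c' unfolding corner_def by auto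
  have "card {c', c, d} \<le> card D" using card_mono[OF fin] c'D cD d by simp
  then have n3: "3 \<le> n" using card ne d by simp
  have nN: "n \<le> psize rho" using card_mono[OF finite_diagram sub] card card_diagram by simp
  have cells: "c' \<in> diagram rho" "c \<in> diagram rho" "d \<in> diagram rho" using sub cD c'D d by auto
  have entries: "S c' = n" "S c = n - 1" "S d = n - 2"
    using S cells ne d unfolding SYT_extending_def by auto
  define S' where "S' = (\<lambda>x. swapv (n - 1) n (S x))"
  have "\<not> adjacent c c'" using corner_adjacent_notin[OF c] c'D by blast
  then have S'SYT: "S' \<in> SYT rho" and step: "(S, S') \<in> dual_step rho n"
    unfolding S'_def using dual_step_swapping_max[OF SS n3 nN cells entries _ between] by auto
  have "S \<in> SYT_extending rho (D - {c'}) (B(c' := n))"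
    by (rule SYT_extending_mono[OF S]) (use ne d cD in auto)
  moreover have "S' \<in> SYT_extending rho (D - {c}) (B(c := n))"
    unfolding SYT_extending_def
  proof (intro CollectI conjI ballI)
    show "S' \<in> SYT rho" by (fact S'SYT)
    fix x assume x: "x \<in> diagram rho - (D - {c})"
    show "S' x = (B(c := n)) x"
    proof (cases "x = c")
      case False
      then have "x \<in> diagram rho - D" using x by auto
      moreover from this have "S x = B x"
        using S d ne cD c'D unfolding SYT_extending_def by auto
      moreover have "n < B x" using bij_betw_atLeast_less[OF bij] calculation(1) by blast
      ultimately show ?thesis unfolding S'_def using False n3 by (auto simp: swapv_def)
    qed (simp add: S'_def entries n3 swapv_def)
  qed
  ultimately show ?thesis using that step by blast
qed

lemma SYT_extending_reaches_top_corner: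
  assumes fin: "finite D" and dc: "down_closed D" and sub: "D \<subseteq> diagram rho" and card: "card D = n"
    and bij: "bij_betw B (diagram rho - D) {n + 1..psize rho}" and X: "X \<in> SYT_extending rho D B"
    and c: "corner D (x, k)"
    and top: "\<And>i j. (i, j) \<in> D \<Longrightarrow> j \<le> k" and right: "\<And>i. (i, k) \<in> D \<Longrightarrow> i \<le> x"
    and same_corner: "\<And>e Z Z'. corner D e \<Longrightarrow> Z \<in> SYT_extending rho (D - {e}) (B(e := n)) \<Longrightarrow>
      Z' \<in> SYT_extending rho (D - {e}) (B(e := n)) \<Longrightarrow> (Z, Z') \<in> dual_connected rho n"
  obtains Y where "Y \<in> SYT_extending rho (D - {(x, k)}) (B((x, k) := n))" "(X, Y) \<in> dual_connected rho n"
proof -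
  have "(x, k) \<in> D" using c unfolding corner_def by simp
  then have n: "1 \<le> n" "n \<le> psize rho"
    using card fin card_mono[OF finite_diagram sub] card_diagram by (auto simp: Suc_le_eq card_gt_0_iff)
  obtain c' where c': "corner D c'" and Xc': "X c' = n"
    by (rule SYT_extending_max_at_corner[OF X bij sub n])
  show ?thesis
  proof (cases "c' = (x, k)")
    case True
    then show ?thesis using that SYT_extending_fun_upd[OF X Xc'] by blast
  next
    case False
    obtain a y where ay: "c' = (a, y)" by force
    have ne: "(a, y) \<noteq> (x, k)" using False ay by simp
    obtain d where d: "d \<in> D" "d \<noteq> (x, k)" "d \<noteq> (a, y)"
      and d_adj: "\<And>v. adjacent d v \<Longrightarrow> v \<in> D \<Longrightarrow> v = (x, k) \<or> v = (a, y)"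
      and between: "content (x, k) < content d" "content d < content (a, y)"
      using top right that by (rule cell_between_corners[OF dc fin c _ _ c'[unfolded ay] ne])
    obtain S S' where S: "S \<in> SYT_extending rho (D - {(a, y)}) (B((a, y) := n))"
      and S': "S' \<in> SYT_extending rho (D - {(x, k)}) (B((x, k) := n))"
      and step: "(S, S') \<in> dual_step rho n"
      by (rule dual_step_moves_max_between_corners[OF fin dc sub card bij
          SYT_extending_increasing_off[OF X] c c'[unfolded ay] ne[symmetric] d d_adj between])
    have "(X, S) \<in> dual_connected rho n"
      using same_corner[OF c'[unfolded ay] SYT_extending_fun_upd[OF X Xc'[unfolded ay]] S] .
    then have "(X, S') \<in> dual_connected rho n"
      using step by (simp add: rtrancl_into_rtrancl)
    with S' show ?thesis by (rule that)
  qed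
qed

lemma SYT_extending_connected:
  "finite D \<Longrightarrow> down_closed D \<Longrightarrow> D \<subseteq> diagram rho \<Longrightarrow> card D = n \<Longrightarrow>
   bij_betw B (diagram rho - D) {n + 1..psize rho} \<Longrightarrow>
   T \<in> SYT_extending rho D B \<Longrightarrow> T' \<in> SYT_extending rho D B \<Longrightarrow> (T, T') \<in> dual_connected rho n"
proof (induction n arbitrary: D B T T')
  case 0
  then have "D = {}" by simp
  then have "T = T'" using SYT_extending_empty 0 by blast
  then show ?case by simp
next
  case (Suc m)
  note fin = Suc.prems(1) and dc = Suc.prems(2) and sub = Suc.prems(3) and card = Suc.prems(4)
    and bij = Suc.prems(5)
  have nN: "Suc m \<le> psize rho" using card_mono[OF finite_diagram sub] card card_diagram by simp
  have same_corner: "(Z, Z') \<in> dual_connected rho (Suc m)"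
    if e: "corner D e" and Z: "Z \<in> SYT_extending rho (D - {e}) (B(e := Suc m))"
      and Z': "Z' \<in> SYT_extending rho (D - {e}) (B(e := Suc m))" for e Z Z'
  proof -
    have eD: "e \<in> D" using e unfolding corner_def by simp
    have "(Z, Z') \<in> dual_connected rho m"
    proof (rule Suc.IH[OF _ _ _ _ _ Z Z'])
      show "finite (D - {e})" "D - {e} \<subseteq> diagram rho" "card (D - {e}) = m"
        using fin sub card eD by auto
      show "down_closed (D - {e})" using dc e by (rule down_closed_Diff_corner)
      have "bij_betw (B(e := Suc m)) (insert e (diagram rho - D)) {Suc m..psize rho}"
        using bij_betw_fun_upd_insert[OF bij _ nN] eD by simp
      moreover have "insert e (diagram rho - D) = diagram rho - (D - {e})" using eD sub by auto
      ultimately show "bij_betw (B(e := Suc m)) (diagram rho - (D - {e})) {m + 1..psize rho}" by simp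
    qed
    with dual_connected_mono[of m "Suc m" rho] show ?thesis by (meson le_SucI order_refl subsetD)
  qed
  have "D \<noteq> {}" using card by auto
  then obtain x k where c: "corner D (x, k)"
    and top: "\<And>i j. (i, j) \<in> D \<Longrightarrow> j \<le> k" and right: "\<And>i. (i, k) \<in> D \<Longrightarrow> i \<le> x"
    using top_corner_exists[OF fin] by blast
  obtain Y where Y: "Y \<in> SYT_extending rho (D - {(x, k)}) (B((x, k) := Suc m))"
    and TY: "(T, Y) \<in> dual_connected rho (Suc m)"
    using Suc.prems(6) top right same_corner
    by (rule SYT_extending_reaches_top_corner[OF fin dc sub card bij _ c])
  obtain Y' where Y': "Y' \<in> SYT_extending rho (D - {(x, k)}) (B((x, k) := Suc m))"
    and T'Y': "(T', Y') \<in> dual_connected rho (Suc m)"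
    using Suc.prems(7) top right same_corner
    by (rule SYT_extending_reaches_top_corner[OF fin dc sub card bij _ c])
  have "(Y, Y') \<in> dual_connected rho (Suc m)" using same_corner[OF c Y Y'] .
  then show ?case
    using rtrancl_trans[OF rtrancl_trans[OF TY] dual_connected_sym[OF T'Y']] by blast
qed

lemma ASYT_eq_SYT_extending: "ASYT rho la A = SYT_extending rho (diagram la) A"
  unfolding ASYT_def SYT_extending_def skew_def by simp

lemma ASYT_connected:
  assumes "is_partition la" "diagram la \<subseteq> diagram rho" "psize la = n"
    and "bij_betw A (skew rho la) {n + 1..psize rho}"
    and "T \<in> ASYT rho la A" "T' \<in> ASYT rho la A"
  shows "(T, T') \<in> dual_connected rho n"
  using assms
  by (intro SYT_extending_connected[OF finite_diagram down_closed_diagram])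
    (auto simp: card_diagram ASYT_eq_SYT_extending skew_def)

lemma morphism_image_closed_d_tab:
  assumes scg: "signed_colored_graph n N V sig E" and ax: "ax1 n V sig E"
    and morph: "morphism n N V sig E (ASYT rho la A) desc_sig (aug_edges rho la A) phi"
    and N: "psize rho = N" and v: "v \<in> V"
    and i: "1 < i" "i < n" "i + 1 \<le> N" and moves: "d_tab i (phi v) \<noteq> phi v"
  shows "d_tab i (phi v) \<in> phi ` V"
proof -
  have phi_v: "phi v \<in> SYT rho" using morph v unfolding morphism_def ASYT_def by auto
  have "desc_sig (phi v) (i - 1) = - desc_sig (phi v) i"
    using desc_sig_flip_if_d_tab_moves[OF phi_v _ _ moves] i N by simp
  moreover have "desc_sig (phi v) j = sig v j" if "1 \<le> j" "j < N" for j
    using morph v that unfolding morphism_def by blast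
  ultimately have "sig v (i - 1) = - sig v i" using i by simp
  then obtain x where x: "{v, x} \<in> E i" using ax v i unfolding ax1_def by blast
  then have xV: "x \<in> V" using scg i unfolding signed_colored_graph_def by blast
  have "{phi v, phi x} \<in> aug_edges rho la A i" using morph x i unfolding morphism_def by blast
  then obtain S where S: "{phi v, phi x} = {S, d_tab i S}" "S \<in> ASYT rho la A"
    unfolding aug_edges_def by blast
  have "d_tab i (d_tab i S) = S"
    using d_tab_involution[of S rho i] S(2) i N unfolding ASYT_def by simp
  then have "phi x = d_tab i (phi v)" using S(1) by (auto simp: doubleton_eq_iff)
  with xV show ?thesis by (metis image_eqI)
qed

lemma morphism_image_closed_dual_connected:
  assumes scg: "signed_colored_graph n N V sig E" and ax: "ax1 n V sig E"
    and morph: "morphism n N V sig E (ASYT rho la A) desc_sig (aug_edges rho la A) phi"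
    and N: "psize rho = N"
  shows "dual_connected rho n `` (phi ` V) = phi ` V"
proof (rule Image_closed_trancl, clarify)
  fix Y v assume v: "v \<in> V" and "(phi v, Y) \<in> dual_step rho n \<union> (dual_step rho n)\<inverse>"
  then obtain i where i: "1 < i" "i < n" "i + 1 \<le> N" and
    "Y = d_tab i (phi v) \<and> d_tab i (phi v) \<noteq> phi v \<or>
     Y \<in> SYT rho \<and> phi v = d_tab i Y \<and> d_tab i Y \<noteq> Y"
    using N unfolding dual_step_def by blast
  then have "Y = d_tab i (phi v) \<and> d_tab i (phi v) \<noteq> phi v"
    using d_tab_involution[of Y rho i] N by auto
  then show "Y \<in> phi ` V"
    using morphism_image_closed_d_tab[OF scg ax morph N v i] by simp
qed

theorem lemma3p6:
  fixes n N :: nat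
    and V :: "'v set" and sig :: "'v \<Rightarrow> nat \<Rightarrow> int" and E :: "nat \<Rightarrow> 'v set set"
    and la rho :: "nat list" and A :: "nat \<times> nat \<Rightarrow> nat"
    and phi :: "'v \<Rightarrow> (nat \<times> nat \<Rightarrow> nat)"
  assumes "signed_colored_graph n N V sig E"
    and "ax1 n V sig E"
    and "is_partition la" and "is_partition rho" and "diagram la \<subseteq> diagram rho"
    and "psize la = n" and "psize rho = N"
    and "bij_betw A (skew rho la) {n + 1..N}"
    and "ASYT rho la A \<noteq> {}"
    and "morphism n N V sig E (ASYT rho la A) desc_sig (aug_edges rho la A) phi"
    and "V \<noteq> {}"
  shows "phi ` V = ASYT rho la A"
proof
  show image: "phi ` V \<subseteq> ASYT rho la A" using assms(10) unfolding morphism_def by auto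
  obtain v where v: "v \<in> V" using assms(11) by blast
  show "ASYT rho la A \<subseteq> phi ` V"
  proof
    fix T assume "T \<in> ASYT rho la A"
    then have "(phi v, T) \<in> dual_connected rho n"
      using ASYT_connected[OF assms(3,5,6)] assms(7,8) image v by blast
    then show "T \<in> phi ` V"
      using morphism_image_closed_dual_connected[OF assms(1,2,10,7)] v by blast
  qed
qed

end
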